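(* Let $D$ be a non-commutative division ring with center $F$ and let $M$ be a maximal subgroup of $D^*$ containing some element $a\notin F$ that is algebraic over $F$. If $M$ is abelian, then $[D:F]<\infty$.
   Context: $D^*$ is the multiplicative group of $D$; maximal subgroup = proper subgroup maximal among proper subgroups. *)

theory Defs
  imports Main
begin

definition center :: "'a::division_ring set" where
  "center = {x. \<forall>y. x * y = y * x}"

definition units_set :: "'a::division_ring set" where
  "units_set = {x. x \<noteq> 0}"

definition mult_subgroup :: "'a::division_ring set \<Rightarrow> bool" where
  "mult_subgroup H \<longleftrightarrow> H \<subseteq> units_set \<and> 1 \<in> H
     \<and> (\<forall>x\<in>H. \<forall>y\<in>H. x * y \<in> H) \<and> (\<forall>x\<in>H. inverse x \<in> H)"

definition maximal_mult_subgroup :: "'a::division_ring set \<Rightarrow> bool" where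
  "maximal_mult_subgroup M \<longleftrightarrow> mult_subgroup M \<and> M \<noteq> units_set
     \<and> (\<forall>N. mult_subgroup N \<and> M \<subseteq> N \<and> N \<noteq> units_set \<longrightarrow> N = M)"

text \<open>a is algebraic over the center F: a is a root of a nonzero polynomial
  with coefficients in F (coefficients are central, so the side does not matter).\<close>
definition algebraic_over_center :: "'a::division_ring \<Rightarrow> bool" where
  "algebraic_over_center a \<longleftrightarrow> (\<exists>n c. (\<forall>i\<le>n. c i \<in> center) \<and> (\<exists>i\<le>n. c i \<noteq> 0)
     \<and> (\<Sum>i\<le>n. c i * a ^ i) = 0)"

definition finite_dim_over_center :: "'a::division_ring itself \<Rightarrow> bool" where
  "finite_dim_over_center _ \<longleftrightarrow> (\<exists>S::'a set. finite S \<and>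
     (\<forall>x::'a. \<exists>c. (\<forall>s\<in>S. c s \<in> center) \<and> x = (\<Sum>s\<in>S. c s * s)))"

end

theory Submission imports Defs begin

text \<open>Maximality of \<open>M\<close> forces the centralizer \<open>K\<close> of \<open>a\<close> to be \<open>M \<union> {0}\<close>, a field.
  Let \<open>N\<close> be the degree of \<open>a\<close> over \<open>F\<close>. The operators \<open>y \<mapsto> \<Sum>\<^sub>j\<^sub><\<^sub>N e\<^sub>j y a\<^sup>j\<close>
  (\<open>e \<in> D\<^sup>N\<close>) are right \<open>K\<close>-linear, and they are \<open>D\<close>-linearly independent because
  \<open>1, a, \<dots>, a\<^sup>N\<^sup>-\<^sup>1\<close> are \<open>F\<close>-independent. Comparing annihilators in \<open>D\<^sup>N\<close> via their echelon
  pivots shows that \<open>D\<close> is a finite-dimensional right \<open>K\<close>-space and that right multiplication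
  by any \<open>k \<in> K\<close> is one of these operators; independence then makes its coefficients central,
  so \<open>K = F[a]\<close> is finite over \<open>F\<close>, and hence so is \<open>D\<close>.\<close>

lemma centerI: "(\<And>y. x * y = y * x) \<Longrightarrow> x \<in> center"
  by (simp add: center_def)

lemma centerD: "x \<in> center \<Longrightarrow> x * y = y * x"
  by (simp add: center_def)

lemma center_sum: "(\<And>i. i \<in> I \<Longrightarrow> f i \<in> center) \<Longrightarrow> sum f I \<in> center"
  by (rule centerI) (simp add: sum_distrib_left sum_distrib_right centerD)

lemma center_mult: "x \<in> center \<Longrightarrow> y \<in> center \<Longrightarrow> x * y \<in> center"
  by (rule centerI) (metis centerD mult.assoc)

lemma center_inverse: "x \<in> center \<Longrightarrow> inverse x \<in> center"
  by (rule centerI) (metis centerD mult_commute_imp_mult_inverse_commute)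

lemma center_uminus: "x \<in> center \<Longrightarrow> - x \<in> center"
  by (rule centerI) (simp add: centerD)

definition centralizer :: "'a::semigroup_mult \<Rightarrow> 'a set" where
  "centralizer a = {k. k * a = a * k}"

lemma centralizer_power_commute: "(k::'a::monoid_mult) \<in> centralizer a \<Longrightarrow> k * a ^ j = a ^ j * k"
  unfolding centralizer_def using power_commuting_commutes[of a k j] by simp

lemma centralizer_mult: "x \<in> centralizer a \<Longrightarrow> y \<in> centralizer a \<Longrightarrow> x * y \<in> centralizer a"
  unfolding centralizer_def by (simp add: mult.assoc) (simp flip: mult.assoc)

lemma centralizer_inverse:
  "(x::'a::division_ring) \<in> centralizer a \<Longrightarrow> inverse x \<in> centralizer a"
  by (simp add: centralizer_def mult_commute_imp_mult_inverse_commute)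

lemma maximal_abelian_subgroup_centralizer_commutative:
  fixes M :: "'a::division_ring set"
  assumes max: "maximal_mult_subgroup M" and aM: "a \<in> M" and aF: "a \<notin> center"
    and abel: "\<forall>x\<in>M. \<forall>y\<in>M. x * y = y * x"
    and k1: "k1 \<in> centralizer a" and k2: "k2 \<in> centralizer a"
  shows "k1 * k2 = k2 * k1"
proof -
  define C where "C = centralizer a - {0}"
  have "M \<subseteq> units_set"
    using max by (simp add: maximal_mult_subgroup_def mult_subgroup_def)
  then have "M \<subseteq> C"
    using abel aM unfolding C_def centralizer_def units_set_def by blast
  moreover have "mult_subgroup C"
    unfolding mult_subgroup_def C_def units_set_def
    by (auto intro: centralizer_mult centralizer_inverse) (simp add: centralizer_def)
  moreover have "C \<noteq> units_set"
  proof
    assume "C = units_set"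
    then have "a * y = y * a" for y
    proof (cases "y = 0")
      case False
      then have "y \<in> centralizer a" using \<open>C = units_set\<close> by (auto simp: C_def units_set_def)
      then show ?thesis by (simp add: centralizer_def)
    qed simp
    then show False using aF by (simp add: center_def)
  qed
  ultimately have "C = M"
    using max by (simp add: maximal_mult_subgroup_def)
  show ?thesis
  proof (cases "k1 = 0 \<or> k2 = 0")
    case False
    then have "k1 \<in> M" "k2 \<in> M" using k1 k2 \<open>C = M\<close> by (auto simp: C_def)
    then show ?thesis using abel by blast
  qed auto
qed

lemma last_nonzero_coefficient_relation:
  fixes a :: "'a::division_ring"
  assumes "\<forall>i<n. c i \<in> center" "(\<Sum>i<n. c i * a ^ i) = 0" "\<exists>i<n. c i \<noteq> 0"
  shows "\<exists>t<n. c t \<noteq> 0 \<and> (\<forall>i\<le>t. c i \<in> center) \<and> (\<Sum>i\<le>t. c i * a ^ i) = 0"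
proof -
  define T where "T = {i. i < n \<and> c i \<noteq> 0}"
  have fT: "finite T" and neT: "T \<noteq> {}" using assms(3) by (auto simp: T_def)
  define t where "t = Max T"
  have tn: "t < n" and ct: "c t \<noteq> 0"
    using Max_in[OF fT neT] by (auto simp: T_def t_def)
  have "(\<Sum>i\<le>t. c i * a ^ i) = (\<Sum>i<n. c i * a ^ i)"
  proof (rule sum.mono_neutral_left)
    show "\<forall>i\<in>{..<n} - {..t}. c i * a ^ i = 0"
      using Max_ge[OF fT] by (force simp: T_def t_def)
  qed (use tn in auto)
  then show ?thesis using assms tn ct by (intro exI[of _ t]) auto
qed

lemma algebraic_minimal_relation:
  fixes a :: "'a::division_ring"
  assumes "algebraic_over_center a"
  obtains N b where "N \<ge> 1" "\<And>j. b j \<in> center" "a ^ N = (\<Sum>j<N. b j * a ^ j)"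
    "\<And>c. \<forall>j<N. c j \<in> center \<Longrightarrow> (\<Sum>j<N. c j * a ^ j) = 0 \<Longrightarrow> \<forall>j<N. c j = 0"
proof -
  define Deg where
    "Deg = {d. \<exists>c. (\<forall>i\<le>d. c i \<in> center) \<and> c d \<noteq> 0 \<and> (\<Sum>i\<le>d. c i * a ^ i) = 0}"
  obtain n c where "\<forall>i\<le>n. c i \<in> center" "\<exists>i\<le>n. c i \<noteq> 0" "(\<Sum>i\<le>n. c i * a ^ i) = 0"
    using assms by (auto simp: algebraic_over_center_def)
  then have "\<exists>t<Suc n. c t \<noteq> 0 \<and> (\<forall>i\<le>t. c i \<in> center) \<and> (\<Sum>i\<le>t. c i * a ^ i) = 0"
    by (intro last_nonzero_coefficient_relation) (auto simp: lessThan_Suc_atMost less_Suc_eq_le)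
  then have "Deg \<noteq> {}" by (auto simp: Deg_def)
  define N where "N = (LEAST d. d \<in> Deg)"
  have "N \<in> Deg" unfolding N_def using \<open>Deg \<noteq> {}\<close> by (auto intro: LeastI)
  then obtain p where p: "\<forall>i\<le>N. p i \<in> center" "p N \<noteq> 0" "(\<Sum>i\<le>N. p i * a ^ i) = 0"
    by (auto simp: Deg_def)
  have N1: "N \<ge> 1"
    using p by (cases N) auto
  define b where "b j = (if j < N then - (inverse (p N) * p j) else 0)" for j
  have bc: "b j \<in> center" for j
    using p by (simp add: b_def center_uminus center_mult center_inverse) (simp add: center_def)
  have "p N * a ^ N = - (\<Sum>j<N. p j * a ^ j)"
    using p(3) by (simp add: lessThan_Suc_atMost[symmetric] eq_neg_iff_add_eq_0 add.commute)
  then have "a ^ N = inverse (p N) * - (\<Sum>j<N. p j * a ^ j)"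
    using p(2) by (metis left_inverse mult_1 mult.assoc)
  also have "\<dots> = (\<Sum>j<N. b j * a ^ j)"
    by (simp add: b_def sum_distrib_left sum_negf mult.assoc)
  finally have red: "a ^ N = (\<Sum>j<N. b j * a ^ j)" .
  have indep: "\<forall>j<N. c j = 0"
    if rel: "\<forall>j<N. c j \<in> center" "(\<Sum>j<N. c j * a ^ j) = 0" for c
  proof (rule ccontr)
    assume "\<not> (\<forall>j<N. c j = 0)"
    then have "\<exists>j<N. c j \<noteq> 0" by blast
    then obtain t where "t < N" "c t \<noteq> 0" "\<forall>i\<le>t. c i \<in> center" "(\<Sum>i\<le>t. c i * a ^ i) = 0"
      using last_nonzero_coefficient_relation[OF rel] by blast
    then have "t \<in> Deg" unfolding Deg_def by blast
    then show False using Least_le[of "\<lambda>d. d \<in> Deg" t] \<open>t < N\<close> by (simp add: N_def)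
  qed
  show ?thesis using that[OF N1 bc red indep] by blast
qed

lemma central_combination_image:
  assumes "finite P" and "\<And>q. q \<in> P \<Longrightarrow> e q \<in> center"
  shows "\<exists>c. (\<forall>s\<in>g ` P. c s \<in> center) \<and> (\<Sum>q\<in>P. e q * g q) = (\<Sum>s\<in>g ` P. c s * s)"
proof -
  define c where "c s = (\<Sum>q\<in>{q\<in>P. g q = s}. e q)" for s
  have "(\<Sum>q\<in>P. e q * g q) = (\<Sum>s\<in>g ` P. \<Sum>q\<in>{q\<in>P. g q = s}. e q * g q)"
    using sum.image_gen[OF assms(1), of "\<lambda>q. e q * g q" g] .
  also have "\<dots> = (\<Sum>s\<in>g ` P. c s * s)"
    by (rule sum.cong[OF refl]) (simp add: c_def sum_distrib_right)
  finally show ?thesis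
    using assms(2) by (intro exI[of _ c]) (auto intro!: center_sum simp: c_def)
qed

locale algebraic_commutative_centralizer =
  fixes a :: "'a::division_ring" and N :: nat and b :: "nat \<Rightarrow> 'a"
  assumes degree_pos: "N \<ge> 1"
    and relation_central: "\<And>j. b j \<in> center"
    and minimal_relation: "a ^ N = (\<Sum>j<N. b j * a ^ j)"
    and powers_independent:
      "\<And>c. \<forall>j<N. c j \<in> center \<Longrightarrow> (\<Sum>j<N. c j * a ^ j) = 0 \<Longrightarrow> \<forall>j<N. c j = 0"
    and centralizer_commutative:
      "\<And>k1 k2. k1 \<in> centralizer a \<Longrightarrow> k2 \<in> centralizer a \<Longrightarrow> k1 * k2 = k2 * k1"
begin

text \<open>\<open>act e\<close> is the action on \<open>D\<close> of the element \<open>\<Sum>\<^sub>j e\<^sub>j \<otimes> a\<^sup>j\<close> of \<open>D \<otimes>\<^sub>F F[a]\<^sup>o\<^sup>p\<close>.\<close>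

definition act :: "(nat \<Rightarrow> 'a) \<Rightarrow> 'a \<Rightarrow> 'a" where
  "act e y = (\<Sum>j<N. e j * y * a ^ j)"

lemma act_cong: "(\<And>j. j < N \<Longrightarrow> e j = e' j) \<Longrightarrow> act e y = act e' y"
  by (simp add: act_def)

lemma act_add_coeffs: "act (\<lambda>j. e j + e' j) y = act e y + act e' y"
  by (simp add: act_def distrib_left distrib_right sum.distrib)

lemma act_diff_coeffs: "act (\<lambda>j. e j - e' j) y = act e y - act e' y"
  by (simp add: act_def left_diff_distrib right_diff_distrib sum_subtractf)

lemma act_scale_coeffs: "act (\<lambda>j. d * e j) y = d * act e y"
  by (simp add: act_def sum_distrib_left mult.assoc)

lemma act_diff: "act e (y - z) = act e y - act e z"
  by (simp add: act_def left_diff_distrib right_diff_distrib sum_subtractf)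

lemma act_mult_centralizer:
  assumes "k \<in> centralizer a" shows "act e (y * k) = act e y * k"
proof -
  have "e j * (y * k) * a ^ j = e j * y * a ^ j * k" for j
    using centralizer_power_commute[OF assms, of j] by (simp add: mult.assoc)
  then show ?thesis by (simp add: act_def sum_distrib_right)
qed

lemma act_combination:
  assumes "\<forall>i<m. h i \<in> centralizer a"
  shows "act e (\<Sum>i<m. xs i * h i) = (\<Sum>i<m. act e (xs i) * h i)"
proof -
  have "act e (\<Sum>i<m. xs i * h i) = (\<Sum>i<m. act e (xs i * h i))"
    unfolding act_def by (simp add: sum_distrib_left sum_distrib_right sum.swap[of _ "{..<m}"])
  then show ?thesis using assms by (simp add: act_mult_centralizer)
qed

lemma act_unit: "act (\<lambda>j. if j = 0 then 1 else 0) y = y"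
proof -
  have "act (\<lambda>j. if j = 0 then 1 else 0) y = (\<Sum>j\<in>{0}. (if j = 0 then 1 else 0) * y * a ^ j)"
    unfolding act_def by (rule sum.mono_neutral_right) (use degree_pos in auto)
  then show ?thesis by simp
qed

lemma act_mult_a: "\<exists>e'. \<forall>y. act e y * a = act e' y"
proof -
  obtain M where N: "N = Suc M" using degree_pos by (cases N) auto
  define e' where "e' j = (if j = 0 then 0 else e (j - 1)) + e M * b j" for j
  have "act e y * a = act e' y" for y
  proof -
    have "act e y * a = (\<Sum>j<N. e j * y * a ^ Suc j)"
      by (simp add: act_def sum_distrib_right mult.assoc power_commutes)
    also have "\<dots> = (\<Sum>j<M. e j * y * a ^ Suc j) + e M * y * a ^ N"
      by (simp add: N)
    also have "e M * y * a ^ N = (\<Sum>j<N. e M * b j * y * a ^ j)"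
      by (simp add: minimal_relation sum_distrib_left mult.assoc centerD[OF relation_central])
    also have "(\<Sum>j<M. e j * y * a ^ Suc j) = (\<Sum>j<N. (if j = 0 then 0 else e (j - 1)) * y * a ^ j)"
      unfolding N sum.lessThan_Suc_shift by simp
    finally show ?thesis
      unfolding act_def e'_def by (simp only: distrib_right sum.distrib)
  qed
  then show ?thesis by blast
qed

text \<open>Normalise one coefficient to \<open>1\<close>; the commutator with any \<open>w\<close> has smaller support,
  hence vanishes, so all coefficients are central and the independence of the powers of \<open>a\<close>
  applies.\<close>

lemma act_eq_zero_imp_coeffs_zero:
  assumes "\<And>y. act e y = 0" and "j < N"
  shows "e j = 0"
  using assms
proof (induction "card {j. j < N \<and> e j \<noteq> 0}" arbitrary: e j rule: less_induct)
  case less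
  show ?case
  proof (rule ccontr)
    assume ej: "e j \<noteq> 0"
    define e1 where "e1 i = inverse (e j) * e i" for i
    have e1_zero: "act e1 y = 0" for y
      unfolding e1_def using less.prems(1) act_scale_coeffs[of "inverse (e j)" e y] by simp
    have e1j: "e1 j = 1" using ej by (simp add: e1_def)
    have supp_e1: "{i. i < N \<and> e1 i \<noteq> 0} = {i. i < N \<and> e i \<noteq> 0}"
      using ej by (auto simp: e1_def)
    have "e1 i \<in> center" if "i < N" for i
    proof (rule centerI)
      fix w
      define e2 where "e2 i = e1 i * w - w * e1 i" for i
      have "act e2 y = act e1 (w * y) - w * act e1 y" for y
        unfolding e2_def act_diff_coeffs act_scale_coeffs by (simp add: act_def mult.assoc)
      then have e2_zero: "act e2 y = 0" for y
        by (simp add: e1_zero)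
      have fin: "finite {i. i < N \<and> e1 i \<noteq> 0}" by simp
      have "card {i. i < N \<and> e2 i \<noteq> 0} \<le> card ({i. i < N \<and> e1 i \<noteq> 0} - {j})"
        by (rule card_mono) (auto simp: e2_def e1j)
      also have "\<dots> < card {i. i < N \<and> e1 i \<noteq> 0}"
        by (rule card_Diff1_less) (use fin less.prems(2) e1j in auto)
      finally have "e2 i = 0"
        using less.hyps[OF _ e2_zero that] supp_e1 by simp
      then show "e1 i * w = w * e1 i" by (simp add: e2_def)
    qed
    moreover have "(\<Sum>i<N. e1 i * a ^ i) = 0"
      using e1_zero[of 1] by (simp add: act_def)
    ultimately have "\<forall>i<N. e1 i = 0" using powers_independent by blast
    then show False using less.prems(2) e1j by simp
  qed
qed

definition rspan :: "nat \<Rightarrow> (nat \<Rightarrow> 'a) \<Rightarrow> 'a set" where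
  "rspan m xs = {y. \<exists>k. (\<forall>i<m. k i \<in> centralizer a) \<and> y = (\<Sum>i<m. xs i * k i)}"

definition annihilator :: "nat \<Rightarrow> (nat \<Rightarrow> 'a) \<Rightarrow> (nat \<Rightarrow> 'a) set" where
  "annihilator m xs = {e. \<forall>i<m. act e (xs i) = 0}"

lemma act_eq_right_mult_on_rspan:
  assumes "\<forall>i<m. act e (xs i) = xs i * k" and "k \<in> centralizer a" and "y \<in> rspan m xs"
  shows "act e y = y * k"
proof -
  obtain h where h: "\<forall>i<m. h i \<in> centralizer a" "y = (\<Sum>i<m. xs i * h i)"
    using assms(3) by (auto simp: rspan_def)
  have "act e y = (\<Sum>i<m. xs i * k * h i)"
    using h assms(1) by (simp add: act_combination)
  also have "\<dots> = (\<Sum>i<m. xs i * h i * k)"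
    using h(1) centralizer_commutative[OF assms(2)] by (simp add: mult.assoc)
  also have "\<dots> = y * k" by (simp add: h(2) sum_distrib_right)
  finally show ?thesis .
qed

text \<open>If some \<open>e0\<close> kills \<open>xs i\<close> for \<open>i < m\<close> but not \<open>xs m\<close>, then every such operator
  maps \<open>x\<close> to its value at \<open>xs m\<close> times one fixed \<open>k\<close>; applying this to \<open>e0\<close> followed by
  right multiplication by \<open>a\<close> shows that \<open>k\<close> commutes with \<open>a\<close>.\<close>

lemma mem_rspan_if_annihilated:
  assumes "\<And>e. e \<in> annihilator m xs \<Longrightarrow> act e x = 0"
  shows "x \<in> rspan m xs"
  using assms
proof (induction m arbitrary: x)
  case 0
  have "x = 0" using 0[of "\<lambda>j. if j = 0 then 1 else 0"] by (simp add: act_unit annihilator_def)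
  then show ?case by (simp add: rspan_def)
next
  case (Suc m)
  show ?case
  proof (cases "\<forall>e\<in>annihilator m xs. act e (xs m) = 0")
    case True
    have "x \<in> rspan m xs"
    proof (rule Suc.IH)
      fix e assume "e \<in> annihilator m xs"
      with True have "e \<in> annihilator (Suc m) xs" by (auto simp: annihilator_def less_Suc_eq)
      then show "act e x = 0" by (rule Suc.prems)
    qed
    then obtain k where k: "\<forall>i<m. k i \<in> centralizer a" "x = (\<Sum>i<m. xs i * k i)"
      by (auto simp: rspan_def)
    have "(\<Sum>i<m. xs i * (k(m := 0)) i) = (\<Sum>i<m. xs i * k i)"
      by (rule sum.cong) auto
    then have "x = (\<Sum>i<Suc m. xs i * (k(m := 0)) i)"
      using k(2) by simp
    moreover have "\<forall>i<Suc m. (k(m := 0)) i \<in> centralizer a"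
      using k(1) by (auto simp: less_Suc_eq centralizer_def)
    ultimately show ?thesis unfolding rspan_def by blast
  next
    case False
    then obtain e0 where e0: "e0 \<in> annihilator m xs" and z: "act e0 (xs m) \<noteq> 0" by blast
    define k where "k = inverse (act e0 (xs m)) * act e0 x"
    have act_x: "act e x = act e (xs m) * k" if e: "e \<in> annihilator m xs" for e
    proof -
      define c where "c = act e (xs m) * inverse (act e0 (xs m))"
      have act_e': "act (\<lambda>j. e j - c * e0 j) y = act e y - c * act e0 y" for y
        by (simp add: act_diff_coeffs act_scale_coeffs)
      have "act e (xs i) - c * act e0 (xs i) = 0" if "i < Suc m" for i
      proof (cases "i < m")
        case True then show ?thesis using e e0 by (simp add: annihilator_def)
      next
        case False
        then have "i = m" using that by simp
        then show ?thesis using z by (simp add: c_def mult.assoc)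
      qed
      then have "(\<lambda>j. e j - c * e0 j) \<in> annihilator (Suc m) xs"
        by (simp add: annihilator_def act_e')
      then have "act e x - c * act e0 x = 0" using Suc.prems act_e' by metis
      then show ?thesis by (simp add: c_def k_def mult.assoc)
    qed
    obtain e1 where e1: "\<forall>y. act e0 y * a = act e1 y" using act_mult_a by blast
    have "e1 \<in> annihilator m xs"
      using e0 e1 by (auto simp: annihilator_def) (metis mult_zero_left)
    then have "act e0 x * a = act e0 (xs m) * a * k"
      using act_x e1 by simp
    moreover have "act e0 x = act e0 (xs m) * k"
      using z by (simp add: k_def mult.assoc[symmetric])
    ultimately have "act e0 (xs m) * (k * a) = act e0 (xs m) * (a * k)"
      by (simp add: mult.assoc)
    then have ka: "k \<in> centralizer a"
      using z by (simp add: centralizer_def)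
    have "x - xs m * k \<in> rspan m xs"
      by (rule Suc.IH) (simp add: act_diff act_mult_centralizer[OF ka] act_x)
    then obtain h where h: "\<forall>i<m. h i \<in> centralizer a" "x - xs m * k = (\<Sum>i<m. xs i * h i)"
      by (auto simp: rspan_def)
    have "(\<Sum>i<m. xs i * (h(m := k)) i) = (\<Sum>i<m. xs i * h i)"
      by (rule sum.cong) auto
    then have "(\<Sum>i<Suc m. xs i * (h(m := k)) i) = (x - xs m * k) + xs m * k"
      using h(2) by simp
    then have "x = (\<Sum>i<Suc m. xs i * (h(m := k)) i)"
      by simp
    moreover have "\<forall>i<Suc m. (h(m := k)) i \<in> centralizer a"
      using h(1) ka by (auto simp: less_Suc_eq)
    ultimately show ?thesis unfolding rspan_def by blast
  qed
qed

definition pivots :: "(nat \<Rightarrow> 'a) set \<Rightarrow> nat set" where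
  "pivots W = {j. j < N \<and> (\<exists>e\<in>W. e j \<noteq> 0 \<and> (\<forall>i<j. e i = 0))}"

lemma annihilator_diff: "e \<in> annihilator m xs \<Longrightarrow> e' \<in> annihilator m xs \<Longrightarrow>
    (\<lambda>j. e j - c * e' j) \<in> annihilator m xs"
  by (simp add: annihilator_def act_diff_coeffs act_scale_coeffs)

lemma annihilator_add: "e \<in> annihilator m xs \<Longrightarrow> e' \<in> annihilator m xs \<Longrightarrow>
    (\<lambda>j. e j + c * e' j) \<in> annihilator m xs"
  by (simp add: annihilator_def act_add_coeffs act_scale_coeffs)

lemma zero_in_annihilator: "(\<lambda>j. 0) \<in> annihilator m xs"
  by (simp add: annihilator_def act_def)

lemma pivots_eq_imp_restriction_mem:
  assumes sub: "W' \<subseteq> W"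
    and diff_W: "\<And>e e' c. e \<in> W \<Longrightarrow> e' \<in> W \<Longrightarrow> (\<lambda>j. e j - c * e' j) \<in> W"
    and add_W': "\<And>e e' c. e \<in> W' \<Longrightarrow> e' \<in> W' \<Longrightarrow> (\<lambda>j. e j + c * e' j) \<in> W'"
    and zero_W': "(\<lambda>j. 0) \<in> W'"
    and pivots_eq: "pivots W' = pivots W"
    and e: "e \<in> W"
  shows "\<exists>e'\<in>W'. \<forall>j<N. e j = e' j"
proof -
  have "\<exists>e'\<in>W'. \<forall>j<N. e j = e' j" if "e \<in> W" "\<forall>i<t. e i = 0" for t e
    using that
  proof (induction "N - t" arbitrary: t e rule: less_induct)
    case less
    consider "N \<le> t" | "t < N" "e t = 0" | "t < N" "e t \<noteq> 0" by linarith
    then show ?case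
    proof cases
      case 1
      then show ?thesis using less.prems(2) zero_W' by (intro bexI[of _ "\<lambda>j. 0"]) auto
    next
      case 2
      then have "\<forall>i<Suc t. e i = 0" using less.prems(2) by (simp add: less_Suc_eq)
      moreover have "N - Suc t < N - t" using 2 by simp
      ultimately show ?thesis using less.hyps[of "Suc t" e] less.prems(1) by blast
    next
      case 3
      then have "t \<in> pivots W" unfolding pivots_def using less.prems by blast
      then have "t \<in> pivots W'" using pivots_eq by simp
      then obtain v where v: "v \<in> W'" "v t \<noteq> 0" "\<forall>i<t. v i = 0"
        by (auto simp: pivots_def)
      define c where "c = e t * inverse (v t)"
      have "(\<lambda>j. e j - c * v j) \<in> W" using diff_W less.prems(1) v(1) sub by blast
      moreover have "\<forall>i<Suc t. e i - c * v i = 0"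
      proof (intro allI impI)
        fix i assume "i < Suc t"
        then consider "i < t" | "i = t" by linarith
        then show "e i - c * v i = 0"
          by cases (use less.prems(2) v(2,3) in \<open>simp_all add: c_def mult.assoc\<close>)
      qed
      moreover have "N - Suc t < N - t" using 3 by simp
      ultimately obtain w where w: "w \<in> W'" "\<forall>j<N. e j - c * v j = w j"
        using less.hyps[of "Suc t" "\<lambda>j. e j - c * v j"] by auto
      have "e j = w j + c * v j" if "j < N" for j
      proof -
        have "e j = (e j - c * v j) + c * v j" by simp
        then show ?thesis using w(2) that by simp
      qed
      then show ?thesis
        using add_W'[OF w(1) v(1), of c] by auto
    qed
  qed
  then show ?thesis using e by blast
qed

lemma pivots_annihilator_psubset:
  assumes "x \<notin> rspan m xs"
  shows "pivots (annihilator (Suc m) (xs(m := x))) \<subset> pivots (annihilator m xs)"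
proof -
  obtain e where e: "e \<in> annihilator m xs" and ex: "act e x \<noteq> 0"
    using mem_rspan_if_annihilated assms by blast
  have sub: "annihilator (Suc m) (xs(m := x)) \<subseteq> annihilator m xs"
    by (auto simp: annihilator_def)
  then have "pivots (annihilator (Suc m) (xs(m := x))) \<subseteq> pivots (annihilator m xs)"
    unfolding pivots_def by blast
  moreover have "pivots (annihilator (Suc m) (xs(m := x))) \<noteq> pivots (annihilator m xs)"
  proof
    assume "pivots (annihilator (Suc m) (xs(m := x))) = pivots (annihilator m xs)"
    then obtain e' where e': "e' \<in> annihilator (Suc m) (xs(m := x))" and "\<forall>j<N. e j = e' j"
      using pivots_eq_imp_restriction_mem[OF sub annihilator_diff annihilator_add
          zero_in_annihilator _ e] by blast
    then have "act e x = act e' x" by (intro act_cong) auto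
    also have "act e' x = 0" using e' by (auto simp: annihilator_def)
    finally show False using ex by simp
  qed
  ultimately show ?thesis by blast
qed

text \<open>Annihilators can shrink at most \<open>N\<close> times, so a family with minimal pivot set
  spans \<open>D\<close> over the centralizer.\<close>

lemma ex_rspan_eq_UNIV: "\<exists>m xs. rspan m xs = UNIV"
proof -
  define pivot_count where "pivot_count q = card (pivots (annihilator (fst q) (snd q)))" for q
  obtain p where p: "\<forall>q. pivot_count p \<le> pivot_count q"
    using ex_has_least_nat[of "\<lambda>_. True" "(0, \<lambda>_. 0)" pivot_count] by blast
  have "x \<in> rspan (fst p) (snd p)" for x
  proof (rule ccontr)
    assume "x \<notin> rspan (fst p) (snd p)"
    then have "card (pivots (annihilator (Suc (fst p)) ((snd p)(fst p := x))))
        < card (pivots (annihilator (fst p) (snd p)))"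
      by (intro psubset_card_mono pivots_annihilator_psubset) (simp add: pivots_def)
    then show False
      using p[rule_format, of "(Suc (fst p), (snd p)(fst p := x))"] by (simp add: pivot_count_def)
  qed
  then show ?thesis by blast
qed

lemma ex_act_eq_right_mult:
  fixes m :: nat and xs :: "nat \<Rightarrow> 'a"
  assumes k: "k \<in> centralizer a"
  shows "\<exists>e. \<forall>i<m. act e (xs i) = xs i * k"
proof (induction m)
  case (Suc m)
  then obtain e0 where e0: "\<forall>i<m. act e0 (xs i) = xs i * k" by blast
  show ?case
  proof (cases "xs m \<in> rspan m xs")
    case True
    then have "act e0 (xs m) = xs m * k"
      by (rule act_eq_right_mult_on_rspan[OF e0 k])
    then show ?thesis using e0 by (auto simp: less_Suc_eq)
  next
    case False
    then obtain e1 where e1: "e1 \<in> annihilator m xs" and z: "act e1 (xs m) \<noteq> 0"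
      using mem_rspan_if_annihilated by blast
    define d where "d = (xs m * k - act e0 (xs m)) * inverse (act e1 (xs m))"
    have act_e: "act (\<lambda>j. e0 j + d * e1 j) y = act e0 y + d * act e1 y" for y
      by (simp add: act_add_coeffs act_scale_coeffs)
    have "act (\<lambda>j. e0 j + d * e1 j) (xs i) = xs i * k" if "i < Suc m" for i
    proof (cases "i < m")
      case True then show ?thesis using e0 e1 act_e by (simp add: annihilator_def)
    next
      case False
      then have "i = m" using that by simp
      then show ?thesis using act_e z by (simp add: d_def mult.assoc)
    qed
    then show ?thesis by blast
  qed
qed simp

text \<open>By the independence of the operators, the coefficients of an operator acting as
  right multiplication by \<open>k\<close> are invariant under conjugation, i.e. central.\<close>

lemma centralizer_eq_polynomial:
  assumes k: "k \<in> centralizer a"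
  shows "\<exists>c. (\<forall>j<N. c j \<in> center) \<and> k = (\<Sum>j<N. c j * a ^ j)"
proof -
  obtain m xs where span: "rspan m xs = UNIV" using ex_rspan_eq_UNIV by blast
  obtain e where "\<forall>i<m. act e (xs i) = xs i * k" using ex_act_eq_right_mult[OF k] by blast
  then have act_e: "act e y = y * k" for y
    using act_eq_right_mult_on_rspan k span by blast
  have "e j \<in> center" if j: "j < N" for j
  proof (rule centerI)
    fix z
    show "e j * z = z * e j"
    proof (cases "z = 0")
      case False
      have "act (\<lambda>j. inverse z * e j * z) y = inverse z * act e (z * y)" for y
        by (simp add: act_def sum_distrib_left mult.assoc)
      also have "\<dots> y = y * k" for y
        using False by (simp add: act_e mult.assoc[symmetric])
      finally have "act (\<lambda>j. e j - inverse z * e j * z) y = 0" for y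
        by (simp add: act_diff_coeffs act_e)
      then have "e j - inverse z * e j * z = 0"
        using act_eq_zero_imp_coeffs_zero j by blast
      then have "z * e j = z * (inverse z * e j * z)" by simp
      also have "\<dots> = e j * z" using False by (simp add: mult.assoc[symmetric])
      finally show ?thesis by simp
    qed simp
  qed
  moreover have "k = (\<Sum>j<N. e j * a ^ j)" using act_e[of 1] by (simp add: act_def)
  ultimately show ?thesis by blast
qed

lemma finite_dim_over_center: "finite_dim_over_center TYPE('a)"
proof -
  obtain m xs where span: "rspan m xs = UNIV" using ex_rspan_eq_UNIV by blast
  define P where "P = {..<m} \<times> {..<N}"
  define g where "g = (\<lambda>(i, j). xs i * a ^ j)"
  have "\<exists>c. (\<forall>s\<in>g ` P. c s \<in> center) \<and> x = (\<Sum>s\<in>g ` P. c s * s)" for x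
  proof -
    obtain h where h: "\<forall>i<m. h i \<in> centralizer a" "x = (\<Sum>i<m. xs i * h i)"
      using span by (auto simp: rspan_def)
    have "\<forall>i\<in>{..<m}. \<exists>ci. (\<forall>j<N. ci j \<in> center) \<and> h i = (\<Sum>j<N. ci j * a ^ j)"
      using centralizer_eq_polynomial h(1) by blast
    then obtain c where c: "\<forall>i\<in>{..<m}. (\<forall>j<N. c i j \<in> center) \<and> h i = (\<Sum>j<N. c i j * a ^ j)"
      by (rule bchoice[THEN exE])
    have "xs i * h i = (\<Sum>j<N. c i j * (xs i * a ^ j))" if "i < m" for i
    proof -
      have "xs i * h i = (\<Sum>j<N. xs i * (c i j * a ^ j))"
        using c that by (simp add: sum_distrib_left)
      also have "\<dots> = (\<Sum>j<N. c i j * (xs i * a ^ j))"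
      proof (rule sum.cong[OF refl])
        fix j assume "j \<in> {..<N}"
        then have "c i j * xs i = xs i * c i j" using c that by (simp add: centerD)
        then show "xs i * (c i j * a ^ j) = c i j * (xs i * a ^ j)"
          by (simp add: mult.assoc[symmetric])
      qed
      finally show ?thesis .
    qed
    then have "x = (\<Sum>q\<in>P. (\<lambda>(i, j). c i j) q * g q)"
      by (simp add: h(2) P_def g_def sum.cartesian_product split_def)
    then show ?thesis
      using central_combination_image[of P "\<lambda>(i, j). c i j" g] c by (auto simp: P_def)
  qed
  moreover have "finite (g ` P)" by (simp add: P_def)
  ultimately show ?thesis unfolding finite_dim_over_center_def by blast
qed


end

theorem lemma2p9:
  fixes M :: "'a::division_ring set" and a :: 'a
  assumes noncomm: "\<exists>x y::'a. x * y \<noteq> y * x"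
    and max: "maximal_mult_subgroup M"
    and aM: "a \<in> M" and aF: "a \<notin> center"
    and alg: "algebraic_over_center a"
    and abel: "\<forall>x\<in>M. \<forall>y\<in>M. x * y = y * x"
  shows "finite_dim_over_center TYPE('a)"
proof -
  obtain N b where "N \<ge> 1" "\<And>j. b j \<in> center" "a ^ N = (\<Sum>j<N. b j * a ^ j)"
    "\<And>c. \<forall>j<N. c j \<in> center \<Longrightarrow> (\<Sum>j<N. c j * a ^ j) = 0 \<Longrightarrow> \<forall>j<N. c j = 0"
    using algebraic_minimal_relation[OF alg] by blast
  moreover have "\<And>k1 k2. k1 \<in> centralizer a \<Longrightarrow> k2 \<in> centralizer a \<Longrightarrow> k1 * k2 = k2 * k1"
    using maximal_abelian_subgroup_centralizer_commutative[OF max aM aF abel] .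
  ultimately interpret algebraic_commutative_centralizer a N b
    by unfold_locales
  show ?thesis by (rule finite_dim_over_center)
qed

end
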